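(* Consider the algorithm described in the context. Suppose: (i) $\|\hat H_k\|\leq\kappa_H$ for all $k$, some $\kappa_H\geq1$; (ii) $f$ is bounded below by $f_{\mathrm{low}}$, twice continuously differentiable with $L_H$-Lipschitz Hessian, and $\|\nabla^2 f(\mathbf{x}_k)\|\leq M$ for all $k$; (iii) every step satisfies $\hat{m}_k(\mathbf{0}) - \hat{m}_k(\hat{\mathbf{s}}_k) \geq \kappa_s \max\left(\|\hat{\mathbf{g}}_k\| \min\left(\Delta_k, \frac{\|\hat{\mathbf{g}}_k\|}{\max(\|\hat{H}_k\|,1)}\right), \hat{\tau}^m_k\Delta_k^2\right)$ for some $\kappa_s>0$ independent of $k$. Let $\epsilon>0$ with $\theta := (1-\alpha)^2 - \frac{4M(r-1)\alpha^2}{\epsilon(1-\alpha)^2}>0$, and let $K\geq0$. If $\sigma_k\geq\epsilon$ for all $k\leq K$, then $\#(\mathcal{A}\cap\mathcal{D}^C(\Delta)\cap\mathcal{U})=0$ for all $\Delta\leq c_2\epsilon$, where $$c_2:=\frac{\min(1-\alpha,(1-\alpha)^2,\theta)}{\kappa_\sigma+c_0^{-1}},\quad \kappa_\sigma:=\max(\kappa_{\mathrm{eg}}\Delta_{\max},\kappa_{\mathrm{eh}}),\quad c_0:=\min\left(\frac{1}{\mu},\frac{1}{\kappa_H},\frac{\kappa_s(1-\eta)}{\kappa_{\mathrm{ef}}\Delta_{\max}},\frac{\kappa_s(1-\eta)}{\kappa_{\mathrm{ef}}}\right).$$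
   Context: Algorithm: Let $f:\mathbb{R}^n\to\mathbb{R}$. Fix $\mathbf{x}_0$, $p\in\{1,\ldots,n\}$, $0<\Delta_0\leq\Delta_{\max}$, $0<\gamma_{\mathrm{dec}}<1<\gamma_{\mathrm{inc}}$, $\eta\in(0,1)$, $\mu>0$. For $k=0,1,\ldots$: select a random $P_k\in\mathbb{R}^{n\times p}$; build $\hat m_k(\hat{\mathbf{s}})=f(\mathbf{x}_k)+\hat{\mathbf{g}}_k^T\hat{\mathbf{s}}+\frac12\hat{\mathbf{s}}^T\hat H_k\hat{\mathbf{s}}$ ($\hat H_k$ symmetric) which is $P_k$-fully quadratic: constants $\kappa_{\mathrm{ef}},\kappa_{\mathrm{eg}},\kappa_{\mathrm{eh}}>0$ independent of $k$ with $|f(\mathbf{x}_k+P_k\hat{\mathbf{s}})-\hat m_k(\hat{\mathbf{s}})|\leq\kappa_{\mathrm{ef}}\Delta_k^3$, $\|P_k^T\nabla f(\mathbf{x}_k+P_k\hat{\mathbf{s}})-\nabla\hat m_k(\hat{\mathbf{s}})\|\leq\kappa_{\mathrm{eg}}\Delta_k^2$, $\|P_k^T\nabla^2 f(\mathbf{x}_k+P_k\hat{\mathbf{s}})P_k-\hat H_k\|\leq\kappa_{\mathrm{eh}}\Delta_k$ for all $\|\hat{\mathbf{s}}\|\leq\Delta_k$; compute a step $\hat{\mathbf{s}}_k$ with $\|\hat{\mathbf{s}}_k\|\leq\Delta_k$; let $R_k:=\frac{f(\mathbf{x}_k)-f(\mathbf{x}_k+P_k\hat{\mathbf{s}}_k)}{\hat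 m_k(\mathbf{0})-\hat m_k(\hat{\mathbf{s}}_k)}$, $\hat\tau^m_k:=\max(-\lambda_{\min}(\hat H_k),0)$, $\hat\sigma^m_k:=\max(\|\hat{\mathbf{g}}_k\|,\hat\tau^m_k)$; if $R_k\geq\eta$ and $\hat\sigma^m_k\geq\mu\Delta_k$ the iteration is successful: $\mathbf{x}_{k+1}=\mathbf{x}_k+P_k\hat{\mathbf{s}}_k$, $\Delta_{k+1}=\min(\gamma_{\mathrm{inc}}\Delta_k,\Delta_{\max})$; otherwise unsuccessful: $\mathbf{x}_{k+1}=\mathbf{x}_k$, $\Delta_{k+1}=\gamma_{\mathrm{dec}}\Delta_k$. Criticality: $\sigma_k:=\max(\|\nabla f(\mathbf{x}_k)\|,\max(-\lambda_{\min}(\nabla^2 f(\mathbf{x}_k)),0))$. Well-alignment: write $\nabla^2 f(\mathbf{x}_k)=\sum_{i=1}^r\lambda_i\mathbf{v}_i\mathbf{v}_i^T$, $\lambda_1\geq\cdots\geq\lambda_r$, $r=\operatorname{rank}(\nabla^2 f(\mathbf{x}_k))$, $\mathbf{v}_i$ orthonormal, $\hat{\mathbf{v}}_i:=P_k^T\mathbf{v}_i$; $P_k$ is well-aligned if $\|P_k\|\leq P_{\max}$, $\|P_k^T\nabla f(\mathbf{x}_k)\|\geq(1-\alpha)\|\nabla f(\mathbf{x}_k)\|$, $\|\hat{\mathbf{v}}_r\|\geq1-\alpha$, and $(\hat{\mathbf{v}}_i^T\hat{\mathbf{v}}_r)^2\leq4\alpha^2$ for $i=1,\ldots,r-1$,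 for fixed $\alpha\in(0,1)$, $P_{\max}>0$ independent of $k$. (The paper writes $r$ without an index $k$; $\theta$ is defined with this $r$.) Index sets, for fixed $K$: $\mathcal{A}$ = iterations in $\{0,\ldots,K\}$ at which $P_k$ is well-aligned; $\mathcal{U}$ = unsuccessful iterations in $\{0,\ldots,K\}$; $\mathcal{D}^C(\Delta)$ = iterations in $\{0,\ldots,K\}$ with $\Delta_k<\Delta$; $\#$ denotes cardinality. *)

theory Defs
  imports "HOL-Analysis.Analysis"
begin

definition matnorm :: "real^'m^'n \<Rightarrow> real" where
  "matnorm A = onorm (\<lambda>v. A *v v)"

definition outer :: "real^'n \<Rightarrow> real^'m \<Rightarrow> real^'m^'n" where
  "outer u v = (\<chi> i j. u $ i * v $ j)"

definition lambda_min :: "real^'n^'n \<Rightarrow> real" where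
  "lambda_min A = Min {l. \<exists>v. v \<noteq> 0 \<and> A *v v = l *\<^sub>R v}"

definition mhat :: "real \<Rightarrow> real^'p \<Rightarrow> real^'p^'p \<Rightarrow> real^'p \<Rightarrow> real" where
  "mhat fx g Hh s = fx + g \<bullet> s + 1/2 * (s \<bullet> (Hh *v s))"

definition tau_m :: "real^'p^'p \<Rightarrow> real" where
  "tau_m Hh = max (- lambda_min Hh) 0"

definition sigma_m :: "real^'p \<Rightarrow> real^'p^'p \<Rightarrow> real" where
  "sigma_m g Hh = max (norm g) (tau_m Hh)"

definition crit :: "real^'n \<Rightarrow> real^'n^'n \<Rightarrow> real" where
  "crit gx Hx = max (norm gx) (max (- lambda_min Hx) 0)"

text \<open>Well-alignment of P w.r.t. gradient gx and the eigenvectors v 1, ..., v r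
  of a rank-r eigendecomposition of the Hessian (eigenvalues ordered decreasingly).\<close>
definition well_aligned :: "real \<Rightarrow> real \<Rightarrow> real^'n \<Rightarrow> nat \<Rightarrow> (nat \<Rightarrow> real^'n) \<Rightarrow> real^'p^'n \<Rightarrow> bool" where
  "well_aligned \<alpha> Pmax gx r v P \<longleftrightarrow>
     matnorm P \<le> Pmax \<and>
     norm (transpose P *v gx) \<ge> (1 - \<alpha>) * norm gx \<and>
     (r \<ge> 1 \<longrightarrow> norm (transpose P *v v r) \<ge> 1 - \<alpha>) \<and>
     (\<forall>i\<in>{1..<r}. ((transpose P *v v i) \<bullet> (transpose P *v v r))^2 \<le> 4 * \<alpha>^2)"

end

theory Submission
  imports Defs
begin

text \<open>If \<open>\<parallel>\<nabla>f(x\<^sub>k)\<parallel> \<ge> \<epsilon>\<close>, the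
  alignment of \<open>P\<^sub>k\<close> with the gradient and the fully quadratic gradient error bound the model
  gradient below by \<open>(1 - \<alpha>)\<epsilon> - \<kappa>\<^sub>e\<^sub>g \<Delta>\<^sub>m\<^sub>a\<^sub>x \<Delta>\<^sub>k\<close>. Otherwise the smallest eigenvalue
  \<open>\<lambda>\<^sub>r\<close> of \<open>\<nabla>\<^sup>2f(x\<^sub>k)\<close> is at most \<open>-\<epsilon>\<close>; evaluating the quadratic form of the model Hessian
  at \<open>u = P\<^sub>k\<^sup>T v\<^sub>r\<close>, which is long (\<open>\<parallel>u\<parallel> \<ge> 1 - \<alpha>\<close>) and almost orthogonal to the other
  projected eigenvectors, shows that its smallest eigenvalue is at most \<open>-\<theta>\<epsilon> + \<kappa>\<^sub>e\<^sub>h \<Delta>\<^sub>k\<close>.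
  Either way the model criticality exceeds \<open>\<Delta>\<^sub>k / c\<^sub>0\<close>; hence it is at least \<open>\<mu>\<Delta>\<^sub>k\<close>, and the
  sufficient decrease of the step dominates the model error \<open>\<kappa>\<^sub>e\<^sub>f \<Delta>\<^sub>k\<^sup>3\<close>, forcing
  \<open>R\<^sub>k \<ge> \<eta>\<close>: the iteration is successful.\<close>

section \<open>Quadratic forms and the smallest eigenvalue\<close>

lemma norm_matrix_vector_le_matnorm: "norm (A *v u) \<le> matnorm A * norm u"
  unfolding matnorm_def by (rule onorm) simp

lemma matnorm_nonneg: "0 \<le> matnorm A"
  unfolding matnorm_def by (rule onorm_pos_le) simp

lemma abs_quadratic_form_le_matnorm:
  fixes A :: "real^'n^'n"
  shows "\<bar>u \<bullet> (A *v u)\<bar> \<le> matnorm A * norm u ^ 2"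
proof -
  have "\<bar>u \<bullet> (A *v u)\<bar> \<le> norm u * norm (A *v u)" by (rule Cauchy_Schwarz_ineq2)
  also have "\<dots> \<le> norm u * (matnorm A * norm u)"
    by (rule mult_left_mono[OF norm_matrix_vector_le_matnorm]) simp
  finally show ?thesis by (simp add: power2_eq_square mult_ac)
qed

lemma inner_matrix_vector_transpose:
  fixes A :: "real^'m^'n"
  shows "u \<bullet> (A *v w) = (transpose A *v u) \<bullet> w"
  by (simp add: dot_lmul_matrix)

lemma quadratic_form_congruence:
  fixes A :: "real^'n^'n" and P :: "real^'p^'n"
  shows "u \<bullet> ((transpose P ** A ** P) *v u) = (P *v u) \<bullet> (A *v (P *v u))"
proof -
  have "(transpose P ** A ** P) *v u = transpose P *v (A *v (P *v u))"
    by (simp only: matrix_vector_mul_assoc matrix_mul_assoc)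
  then show ?thesis
    using inner_matrix_vector_transpose[of u "transpose P"] by simp
qed

lemma symmetric_matrix_inner_commute:
  fixes A :: "real^'n^'n"
  assumes "transpose A = A"
  shows "u \<bullet> (A *v w) = w \<bullet> (A *v u)"
  by (metis assms inner_commute inner_matrix_vector_transpose)

text \<open>\<^const>\<open>lambda_min\<close> is the \<^const>\<open>Min\<close> of this set, which is meaningful only when the
  set is finite and nonempty; both hold for symmetric matrices.\<close>

definition eigenvalues :: "real^'n^'n \<Rightarrow> real set" where
  "eigenvalues A = {l. \<exists>v. v \<noteq> 0 \<and> A *v v = l *\<^sub>R v}"

lemma lambda_min_eq_Min_eigenvalues: "lambda_min A = Min (eigenvalues A)"
  unfolding lambda_min_def eigenvalues_def ..

lemma symmetric_eigenvectors_orthogonal: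
  fixes A :: "real^'n^'n"
  assumes "transpose A = A" "A *v u = l *\<^sub>R u" "A *v w = l' *\<^sub>R w" "l \<noteq> l'"
  shows "u \<bullet> w = 0"
proof -
  have "l * (u \<bullet> w) = w \<bullet> (A *v u)" using assms(2) by (simp add: inner_commute)
  also have "\<dots> = u \<bullet> (A *v w)" using symmetric_matrix_inner_commute[OF assms(1)] by metis
  also have "\<dots> = l' * (u \<bullet> w)" using assms(3) by simp
  finally show ?thesis using assms(4) by simp
qed

lemma finite_eigenvalues_symmetric:
  fixes A :: "real^'n^'n"
  assumes sym: "transpose A = A"
  shows "finite (eigenvalues A)"
proof -
  define e where "e l = (SOME v. v \<noteq> 0 \<and> A *v v = l *\<^sub>R v)" for l
  have e: "e l \<noteq> 0 \<and> A *v e l = l *\<^sub>R e l" if "l \<in> eigenvalues A" for l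
    using that unfolding eigenvalues_def e_def by (rule CollectE) (rule someI_ex)
  have orth: "e l \<bullet> e l' = 0" if "l \<in> eigenvalues A" "l' \<in> eigenvalues A" "l \<noteq> l'" for l l'
    using symmetric_eigenvectors_orthogonal[OF sym] e that by blast
  have "inj_on e (eigenvalues A)"
    by (rule inj_onI) (metis e orth inner_eq_zero_iff)
  moreover have "independent (e ` eigenvalues A)"
  proof (rule pairwise_orthogonal_independent)
    show "pairwise orthogonal (e ` eigenvalues A)"
      unfolding pairwise_def orthogonal_def using orth by (metis imageE)
    show "0 \<notin> e ` eigenvalues A" using e by auto
  qed
  ultimately show ?thesis
    using independent_imp_finite finite_imageD by blast
qed

lemma eq_0_if_linear_plus_quadratic_nonneg:
  fixes a c :: real
  assumes "\<And>t. 0 \<le> t * a + t\<^sup>2 * c"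
  shows "a = 0"
proof (rule ccontr)
  assume "a \<noteq> 0"
  define d where "d = \<bar>c\<bar> + 1"
  have "d > 0" unfolding d_def by simp
  define t where "t = - a / d"
  have "t * a + t\<^sup>2 * c = a\<^sup>2 / d * (c / d - 1)"
    unfolding t_def using \<open>d > 0\<close> by (simp add: power2_eq_square field_simps)
  also have "\<dots> < 0"
    using \<open>a \<noteq> 0\<close> \<open>d > 0\<close> by (intro mult_pos_neg) (auto simp: d_def divide_less_eq)
  finally show False using assms[of t] by simp
qed

lemma quadratic_form_attains_min_on_sphere:
  fixes A :: "real^'n^'n"
  shows "\<exists>u. norm u = 1 \<and> (\<forall>w. (u \<bullet> (A *v u)) * norm w ^ 2 \<le> w \<bullet> (A *v w))"
proof -
  define Q where "Q w = w \<bullet> (A *v w)" for w :: "real^'n"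
  have "continuous_on UNIV Q"
    unfolding Q_def by (intro continuous_intros linear_continuous_on) simp
  then obtain u where u: "u \<in> sphere 0 1" and min: "\<And>y. y \<in> sphere 0 1 \<Longrightarrow> Q u \<le> Q y"
    using continuous_attains_inf[OF compact_sphere] continuous_on_subset by (metis sphere_eq_empty
      not_one_less_zero top_greatest)
  have "Q u * norm w ^ 2 \<le> Q w" for w
  proof (cases "w = 0")
    case False
    have "Q u \<le> Q (sgn w)" using False by (intro min) (simp add: norm_sgn)
    also have "Q (sgn w) = Q w / norm w ^ 2"
      by (simp add: Q_def sgn_div_norm matrix_vector_mult_scaleR power2_eq_square divide_inverse)
    finally show ?thesis using False by (simp add: pos_le_divide_eq)
  qed (simp add: Q_def)
  with u show ?thesis unfolding Q_def by auto
qed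

text \<open>With \<open>z = A u - m u\<close>, the nonnegative form \<open>w \<bullet> A w - m \<parallel>w\<parallel>\<^sup>2\<close> equals
  \<open>2t \<parallel>z\<parallel>\<^sup>2 + O(t\<^sup>2)\<close> at \<open>u + t z\<close>, which forces \<open>z = 0\<close>.\<close>

lemma rayleigh_minimizer_is_eigenvector:
  fixes A :: "real^'n^'n"
  assumes sym: "transpose A = A"
    and min: "\<And>w. m * norm w ^ 2 \<le> w \<bullet> (A *v w)" and at_u: "u \<bullet> (A *v u) = m * norm u ^ 2"
  shows "A *v u = m *\<^sub>R u"
proof -
  define q where "q w = w \<bullet> (A *v w) - m * (w \<bullet> w)" for w
  define z where "z = A *v u - m *\<^sub>R u"
  have expand: "q (u + t *\<^sub>R z) = t * (2 * (z \<bullet> z)) + t\<^sup>2 * q z" for t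
  proof -
    have "q (u + t *\<^sub>R z)
        = q u + t * (u \<bullet> (A *v z) + z \<bullet> (A *v u) - m * (u \<bullet> z) - m * (z \<bullet> u)) + t\<^sup>2 * q z"
      unfolding q_def
      by (simp add: matrix_vector_right_distrib matrix_vector_mult_scaleR inner_add_left
          inner_add_right power2_eq_square algebra_simps)
    moreover have "u \<bullet> (A *v z) = z \<bullet> (A *v u)" by (rule symmetric_matrix_inner_commute[OF sym])
    moreover have "z \<bullet> z = z \<bullet> (A *v u) - m * (z \<bullet> u)"
      unfolding z_def by (simp add: inner_diff_right)
    moreover have "q u = 0" using at_u unfolding q_def power2_norm_eq_inner by simp
    ultimately show ?thesis by (simp add: inner_commute)
  qed
  have "0 \<le> q w" for w using min[of w] unfolding q_def power2_norm_eq_inner by simp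
  then have "0 \<le> t * (2 * (z \<bullet> z)) + t\<^sup>2 * q z" for t
    unfolding expand[symmetric] .
  then have "2 * (z \<bullet> z) = 0" by (rule eq_0_if_linear_plus_quadratic_nonneg)
  then show ?thesis unfolding z_def by simp
qed

lemma symmetric_eigenvalue_le_quadratic_forms:
  fixes A :: "real^'n^'n"
  assumes "transpose A = A"
  obtains l where "l \<in> eigenvalues A" "\<And>w. l * norm w ^ 2 \<le> w \<bullet> (A *v w)"
proof -
  obtain u where u: "norm u = 1" and min: "\<And>w. (u \<bullet> (A *v u)) * norm w ^ 2 \<le> w \<bullet> (A *v w)"
    using quadratic_form_attains_min_on_sphere[of A] by blast
  have "A *v u = (u \<bullet> (A *v u)) *\<^sub>R u"
    using u by (intro rayleigh_minimizer_is_eigenvector[OF assms min]) simp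
  moreover have "u \<noteq> 0" using u by auto
  ultimately have "u \<bullet> (A *v u) \<in> eigenvalues A"
    unfolding eigenvalues_def by blast
  with min show ?thesis using that by blast
qed

lemma lambda_min_in_eigenvalues:
  fixes A :: "real^'n^'n"
  assumes "transpose A = A"
  shows "lambda_min A \<in> eigenvalues A"
proof -
  obtain l where "l \<in> eigenvalues A"
    using symmetric_eigenvalue_le_quadratic_forms[OF assms] by blast
  then show ?thesis
    unfolding lambda_min_eq_Min_eigenvalues
    using Min_in[OF finite_eigenvalues_symmetric[OF assms]] by blast
qed

lemma lambda_min_le_quadratic_form:
  fixes A :: "real^'n^'n"
  assumes "transpose A = A"
  shows "lambda_min A * norm w ^ 2 \<le> w \<bullet> (A *v w)"
proof -
  obtain l where l: "l \<in> eigenvalues A" "\<And>w. l * norm w ^ 2 \<le> w \<bullet> (A *v w)"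
    using symmetric_eigenvalue_le_quadratic_forms[OF assms] by blast
  have "lambda_min A \<le> l"
    unfolding lambda_min_eq_Min_eigenvalues using finite_eigenvalues_symmetric[OF assms] l(1) by simp
  then have "lambda_min A * norm w ^ 2 \<le> l * norm w ^ 2" by (simp add: mult_right_mono)
  with l(2)[of w] show ?thesis by linarith
qed

section \<open>Matrices with an orthonormal eigendecomposition\<close>

locale orthonormal_eigendecomposition =
  fixes H :: "real^'n^'n" and lam :: "nat \<Rightarrow> real" and v :: "nat \<Rightarrow> real^'n" and r :: nat
  assumes decomposition: "H = (\<Sum>i=1..r. lam i *\<^sub>R outer (v i) (v i))"
    and orthonormal: "\<And>i j. i \<in> {1..r} \<Longrightarrow> j \<in> {1..r} \<Longrightarrow> v i \<bullet> v j = (if i = j then 1 else 0)"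
begin

lemma component: "H $ a $ b = (\<Sum>i=1..r. lam i * (v i $ a) * (v i $ b))"
  by (simp add: decomposition sum_component outer_def mult.assoc)

lemma symmetric: "transpose H = H"
  by (simp add: vec_eq_iff transpose_def component mult_ac)

lemma matrix_vector_mult: "H *v w = (\<Sum>i=1..r. (lam i * (v i \<bullet> w)) *\<^sub>R v i)"
proof -
  have "(H *v w) $ a = (\<Sum>i=1..r. (lam i * (v i \<bullet> w)) *\<^sub>R v i) $ a" for a
  proof -
    have "(H *v w) $ a = (\<Sum>b\<in>UNIV. \<Sum>i=1..r. lam i * (v i $ a) * (v i $ b * w $ b))"
      by (simp add: matrix_vector_mult_def component sum_distrib_right mult.assoc)
    also have "\<dots> = (\<Sum>i=1..r. lam i * (v i $ a) * (v i \<bullet> w))"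
      by (subst sum.swap) (simp add: sum_distrib_left inner_vec_def)
    finally show ?thesis by (simp add: sum_component mult_ac)
  qed
  then show ?thesis by (simp add: vec_eq_iff)
qed

lemma quadratic_form: "w \<bullet> (H *v w) = (\<Sum>i=1..r. lam i * (v i \<bullet> w)\<^sup>2)"
  by (simp add: matrix_vector_mult inner_sum_right power2_eq_square inner_commute mult.assoc)

lemma inner_eigenvector:
  assumes "j \<in> {1..r}"
  shows "v j \<bullet> (H *v w) = lam j * (v j \<bullet> w)"
proof -
  have "v j \<bullet> (H *v w) = (\<Sum>i=1..r. if i = j then lam j * (v j \<bullet> w) else 0)"
    unfolding matrix_vector_mult inner_sum_right
    by (rule sum.cong) (use assms orthonormal in auto)
  with assms show ?thesis by simp
qed

lemma nonzero_eigenvalue: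
  assumes "w \<noteq> 0" "H *v w = l *\<^sub>R w" "l \<noteq> 0"
  shows "\<exists>j\<in>{1..r}. l = lam j"
proof (rule ccontr)
  assume "\<not> ?thesis"
  then have "v j \<bullet> w = 0" if "j \<in> {1..r}" for j
    using inner_eigenvector[OF that, of w] assms(2) that by auto
  then have "H *v w = 0" by (simp add: matrix_vector_mult)
  with assms show False by simp
qed

lemma eigenvalue_le_matnorm:
  assumes "j \<in> {1..r}"
  shows "lam j \<le> matnorm H"
proof -
  have "norm (v j) = 1" using orthonormal[OF assms assms] by (simp add: norm_eq_sqrt_inner)
  moreover have "lam j = v j \<bullet> (H *v v j)"
    using inner_eigenvector[OF assms] orthonormal[OF assms assms] by simp
  ultimately show ?thesis
    using abs_quadratic_form_le_matnorm[of "v j" H] by simp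
qed

lemma last_eigenvalue_le_lambda_min:
  assumes order: "\<And>i j. 1 \<le> i \<Longrightarrow> i \<le> j \<Longrightarrow> j \<le> r \<Longrightarrow> lam j \<le> lam i"
    and neg: "lambda_min H < 0"
  shows "1 \<le> r" "lam r \<le> lambda_min H"
proof -
  obtain w where "w \<noteq> 0" "H *v w = lambda_min H *\<^sub>R w"
    using lambda_min_in_eigenvalues[OF symmetric] unfolding eigenvalues_def by blast
  then obtain j where j: "j \<in> {1..r}" "lambda_min H = lam j"
    using nonzero_eigenvalue neg by (metis less_irrefl)
  then show "1 \<le> r" "lam r \<le> lambda_min H" using order[of j r] by auto
qed

lemma compressed_quadratic_form_le:
  fixes P :: "real^'p^'n"
  assumes "1 \<le> r" and "matnorm H \<le> M" and u_def: "u = transpose P *v v r"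
    and cross: "\<And>i. i \<in> {1..<r} \<Longrightarrow> ((transpose P *v v i) \<bullet> u)\<^sup>2 \<le> \<delta>"
  shows "u \<bullet> ((transpose P ** H ** P) *v u) \<le> lam r * norm u ^ 4 + (real r - 1) * M * \<delta>"
proof -
  have M: "0 \<le> M" using assms(2) matnorm_nonneg[of H] by linarith
  have "u \<bullet> ((transpose P ** H ** P) *v u) = (\<Sum>i=1..r. lam i * ((transpose P *v v i) \<bullet> u)\<^sup>2)"
    unfolding quadratic_form_congruence quadratic_form
    by (simp only: inner_matrix_vector_transpose[of "v _" P])
  also have "\<dots> = lam r * norm u ^ 4 + (\<Sum>i\<in>{1..<r}. lam i * ((transpose P *v v i) \<bullet> u)\<^sup>2)"
  proof -
    have "{1..r} = insert r {1..<r}" using \<open>1 \<le> r\<close> by auto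
    moreover have "(u \<bullet> u)\<^sup>2 = norm u ^ 4" by (simp add: power2_norm_eq_inner[symmetric])
    ultimately show ?thesis by (simp add: u_def)
  qed
  also have "(\<Sum>i\<in>{1..<r}. lam i * ((transpose P *v v i) \<bullet> u)\<^sup>2) \<le> (\<Sum>i\<in>{1..<r}. M * \<delta>)"
  proof (rule sum_mono)
    fix i assume i: "i \<in> {1..<r}"
    have "lam i \<le> M" using eigenvalue_le_matnorm[of i] assms(2) i by auto
    then have "lam i * ((transpose P *v v i) \<bullet> u)\<^sup>2 \<le> M * ((transpose P *v v i) \<bullet> u)\<^sup>2"
      by (simp add: mult_right_mono)
    also have "\<dots> \<le> M * \<delta>" using cross[OF i] M by (rule mult_left_mono)
    finally show "lam i * ((transpose P *v v i) \<bullet> u)\<^sup>2 \<le> M * \<delta>" .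
  qed
  also have "(\<Sum>i\<in>{1..<r}. M * \<delta>) = (real r - 1) * M * \<delta>"
    using \<open>1 \<le> r\<close> by (simp add: of_nat_diff)
  finally show ?thesis by simp
qed

lemma lambda_min_approx_compression_le:
  fixes P :: "real^'p^'n" and Hh :: "real^'p^'p"
  assumes "1 \<le> r" and "matnorm H \<le> M" and u_def: "u = transpose P *v v r"
    and cross: "\<And>i. i \<in> {1..<r} \<Longrightarrow> ((transpose P *v v i) \<bullet> u)\<^sup>2 \<le> \<delta>"
    and Hh_sym: "transpose Hh = Hh"
    and model_err: "matnorm (transpose P ** H ** P - Hh) \<le> e"
  shows "lambda_min Hh * norm u ^ 2 \<le> lam r * norm u ^ 4 + (real r - 1) * M * \<delta> + e * norm u ^ 2"
proof -
  have "lambda_min Hh * norm u ^ 2 \<le> u \<bullet> (Hh *v u)"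
    by (rule lambda_min_le_quadratic_form[OF Hh_sym])
  also have "\<dots> = u \<bullet> ((transpose P ** H ** P) *v u) - u \<bullet> ((transpose P ** H ** P - Hh) *v u)"
    by (simp add: matrix_vector_mult_diff_rdistrib inner_diff_right)
  also have "\<dots> \<le> lam r * norm u ^ 4 + (real r - 1) * M * \<delta> + e * norm u ^ 2"
  proof -
    have "\<bar>u \<bullet> ((transpose P ** H ** P - Hh) *v u)\<bar> \<le> e * norm u ^ 2"
      using abs_quadratic_form_le_matnorm[of u] model_err
      by (meson mult_right_mono order_trans zero_le_power2)
    then show ?thesis
      using compressed_quadratic_form_le[OF assms(1-3) cross] by linarith
  qed
  finally show ?thesis .
qed

lemma neg_lambda_min_approx_compression_ge:
  fixes P :: "real^'p^'n" and Hh :: "real^'p^'p"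
  assumes order: "\<And>i j. 1 \<le> i \<Longrightarrow> i \<le> j \<Longrightarrow> j \<le> r \<Longrightarrow> lam j \<le> lam i"
    and "\<alpha> < 1" "0 < \<epsilon>" "lambda_min H \<le> - \<epsilon>" "matnorm H \<le> M"
    and aligned: "well_aligned \<alpha> Pmax g r v P"
    and "transpose Hh = Hh" "matnorm (transpose P ** H ** P - Hh) \<le> e"
  shows "((1 - \<alpha>)^2 - 4 * M * (real r - 1) * \<alpha>^2 / (\<epsilon> * (1 - \<alpha>)^2)) * \<epsilon> - e
    \<le> - lambda_min Hh"
proof -
  have r: "1 \<le> r" and lam_r: "lam r \<le> - \<epsilon>"
    using last_eigenvalue_le_lambda_min[OF order] assms(3,4) by force+
  define u where "u = transpose P *v v r"
  define N where "N = norm u ^ 2"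
  define Z where "Z = 4 * M * (real r - 1) * \<alpha>^2"
  have "1 - \<alpha> \<le> norm u" using aligned r unfolding well_aligned_def u_def by blast
  then have N: "(1 - \<alpha>)^2 \<le> N" unfolding N_def using \<open>\<alpha> < 1\<close> by (intro power_mono) auto
  moreover have "0 < (1 - \<alpha>)^2" using \<open>\<alpha> < 1\<close> by simp
  ultimately have N_pos: "0 < N" by linarith
  have Z: "0 \<le> Z"
    unfolding Z_def using r \<open>matnorm H \<le> M\<close> matnorm_nonneg[of H] by simp
  have "\<forall>i\<in>{1..<r}. ((transpose P *v v i) \<bullet> u)\<^sup>2 \<le> 4 * \<alpha>^2"
    using aligned unfolding well_aligned_def u_def by (elim conjE)
  then have "lambda_min Hh * N \<le> lam r * norm u ^ 4 + (real r - 1) * M * (4 * \<alpha>^2) + e * N"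
    unfolding N_def by (intro lambda_min_approx_compression_le[OF r \<open>matnorm H \<le> M\<close> u_def _ assms(7,8)]) blast
  also have "norm u ^ 4 = N\<^sup>2" unfolding N_def by (simp flip: power_mult)
  also have "(real r - 1) * M * (4 * \<alpha>^2) = Z" by (simp only: Z_def mult_ac)
  finally have "lambda_min Hh * N \<le> lam r * N\<^sup>2 + Z + e * N" .
  then have "lambda_min Hh \<le> lam r * N + Z / N + e"
    using N_pos by (simp add: field_simps power2_eq_square)
  moreover have "lam r * N \<le> - \<epsilon> * (1 - \<alpha>)^2"
  proof -
    have "lam r * N \<le> - \<epsilon> * N" using lam_r N_pos by (intro mult_right_mono) auto
    also have "\<dots> \<le> - \<epsilon> * (1 - \<alpha>)^2" using N \<open>0 < \<epsilon>\<close> by simp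
    finally show ?thesis .
  qed
  moreover have "Z / N \<le> Z / (1 - \<alpha>)^2"
    using Z N N_pos \<open>\<alpha> < 1\<close> by (intro divide_left_mono mult_pos_pos) auto
  moreover have "((1 - \<alpha>)^2 - Z / (\<epsilon> * (1 - \<alpha>)^2)) * \<epsilon> = \<epsilon> * (1 - \<alpha>)^2 - Z / (1 - \<alpha>)^2"
    using \<open>0 < \<epsilon>\<close> \<open>\<alpha> < 1\<close> by (simp add: field_simps)
  ultimately show ?thesis unfolding Z_def by linarith
qed

end

section \<open>Model criticality and successful iterations\<close>

lemma norm_model_gradient_ge:
  assumes "(1 - \<alpha>) * norm g \<le> norm (transpose P *v g)" "\<epsilon> \<le> norm g" "\<alpha> < 1"
    and "norm (transpose P *v g - gh) \<le> e"
  shows "(1 - \<alpha>) * \<epsilon> - e \<le> norm gh"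
proof -
  have "(1 - \<alpha>) * \<epsilon> \<le> (1 - \<alpha>) * norm g" using assms(2,3) by simp
  moreover have "norm (transpose P *v g) - norm gh \<le> e"
    using norm_triangle_ineq2[of "transpose P *v g" gh] assms(4) by linarith
  ultimately show ?thesis using assms(1) by linarith
qed

lemma (in orthonormal_eigendecomposition) model_criticality_ge:
  fixes P :: "real^'p^'n" and Hh :: "real^'p^'p"
  assumes order: "\<And>i j. 1 \<le> i \<Longrightarrow> i \<le> j \<Longrightarrow> j \<le> r \<Longrightarrow> lam j \<le> lam i"
    and "\<alpha> < 1" "0 < \<epsilon>" "\<epsilon> \<le> crit g H" "matnorm H \<le> M"
    and aligned: "well_aligned \<alpha> Pmax g r v P"
    and "transpose Hh = Hh"
    and grad_err: "norm (transpose P *v g - gh) \<le> \<kappa>eg * \<Delta>\<^sup>2"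
    and hess_err: "matnorm (transpose P ** H ** P - Hh) \<le> \<kappa>eh * \<Delta>"
    and "0 \<le> \<kappa>eg" "0 \<le> \<Delta>" "\<Delta> \<le> \<Delta>max"
    and c_le: "c \<le> 1 - \<alpha>" "c \<le> (1 - \<alpha>)^2 - 4 * M * (real r - 1) * \<alpha>^2 / (\<epsilon> * (1 - \<alpha>)^2)"
  shows "c * \<epsilon> - max (\<kappa>eg * \<Delta>max) \<kappa>eh * \<Delta> \<le> sigma_m gh Hh"
proof -
  have "\<epsilon> \<le> norm g \<or> lambda_min H \<le> - \<epsilon>"
    using \<open>\<epsilon> \<le> crit g H\<close> \<open>0 < \<epsilon>\<close> unfolding crit_def by linarith
  then show ?thesis
  proof
    assume "\<epsilon> \<le> norm g"
    have "\<kappa>eg * \<Delta>\<^sup>2 \<le> max (\<kappa>eg * \<Delta>max) \<kappa>eh * \<Delta>"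
      using \<open>0 \<le> \<kappa>eg\<close> \<open>0 \<le> \<Delta>\<close> \<open>\<Delta> \<le> \<Delta>max\<close>
      by (simp add: power2_eq_square mult_left_mono mult_right_mono max.coboundedI1 flip: mult.assoc)
    moreover have "(1 - \<alpha>) * \<epsilon> - \<kappa>eg * \<Delta>\<^sup>2 \<le> norm gh"
      using aligned \<open>\<epsilon> \<le> norm g\<close> \<open>\<alpha> < 1\<close> grad_err unfolding well_aligned_def
      by (intro norm_model_gradient_ge) (auto simp: mult.commute)
    moreover have "c * \<epsilon> \<le> (1 - \<alpha>) * \<epsilon>" using c_le(1) \<open>0 < \<epsilon>\<close> by simp
    ultimately show ?thesis unfolding sigma_m_def by linarith
  next
    assume "lambda_min H \<le> - \<epsilon>"
    have "\<kappa>eh * \<Delta> \<le> max (\<kappa>eg * \<Delta>max) \<kappa>eh * \<Delta>"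
      using \<open>0 \<le> \<Delta>\<close> by (simp add: mult_right_mono)
    moreover have "((1 - \<alpha>)^2 - 4 * M * (real r - 1) * \<alpha>^2 / (\<epsilon> * (1 - \<alpha>)^2)) * \<epsilon> - \<kappa>eh * \<Delta>
        \<le> - lambda_min Hh"
      using \<open>lambda_min H \<le> - \<epsilon>\<close> assms(2,3,5-7) hess_err
      by (intro neg_lambda_min_approx_compression_ge[OF order])
    moreover have "c * \<epsilon> \<le> ((1 - \<alpha>)^2 - 4 * M * (real r - 1) * \<alpha>^2 / (\<epsilon> * (1 - \<alpha>)^2)) * \<epsilon>"
      using c_le(2) \<open>0 < \<epsilon>\<close> by simp
    ultimately show ?thesis unfolding sigma_m_def tau_m_def by linarith
  qed
qed

lemma trust_radius_bounds:
  fixes \<Delta> :: "nat \<Rightarrow> real"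
  assumes "0 < \<Delta> 0" "\<Delta> 0 \<le> \<Delta>max" "0 < \<gamma>dec" "\<gamma>dec < 1" "0 < \<gamma>inc"
    and step: "\<And>k. \<Delta> (Suc k) = min (\<gamma>inc * \<Delta> k) \<Delta>max \<or> \<Delta> (Suc k) = \<gamma>dec * \<Delta> k"
  shows "0 < \<Delta> k \<and> \<Delta> k \<le> \<Delta>max"
proof (induction k)
  case 0
  with assms show ?case by simp
next
  case (Suc k)
  from step[of k] show ?case
  proof
    assume "\<Delta> (Suc k) = \<gamma>dec * \<Delta> k"
    moreover have "\<gamma>dec * \<Delta> k \<le> \<Delta> k" using Suc \<open>\<gamma>dec < 1\<close> by simp
    moreover have "0 < \<gamma>dec * \<Delta> k" using Suc \<open>0 < \<gamma>dec\<close> by simp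
    ultimately show ?case using Suc by linarith
  qed (use Suc \<open>0 < \<gamma>inc\<close> in auto)
qed

lemma model_decrease_dominates_error:
  fixes g :: "real^'p" and Hh :: "real^'p^'p"
  assumes "0 < \<Delta>" "0 < \<kappa>s" "\<eta> < 1" "max (matnorm Hh) 1 \<le> C"
    and "\<kappa>ef * \<Delta> \<le> \<kappa>s * (1 - \<eta>) * C" "\<kappa>ef \<le> \<kappa>s * (1 - \<eta>) * C"
    and critical: "\<Delta> * C < sigma_m g Hh"
    and decrease: "\<kappa>s * max (norm g * min \<Delta> (norm g / max (matnorm Hh) 1)) (tau_m Hh * \<Delta>\<^sup>2) \<le> d"
  shows "0 < d" "\<kappa>ef * \<Delta> ^ 3 \<le> (1 - \<eta>) * d"
proof -
  have "0 < C" using assms(4) by linarith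
  obtain b where b: "0 < b" "b \<le> d" "\<kappa>ef * \<Delta> ^ 3 \<le> (1 - \<eta>) * b"
  proof (cases "\<Delta> * C < norm g")
    case True
    have "\<Delta> * max (matnorm Hh) 1 \<le> \<Delta> * C" using assms(1,4) by simp
    with True have "\<Delta> * max (matnorm Hh) 1 \<le> norm g" by linarith
    then have "min \<Delta> (norm g / max (matnorm Hh) 1) = \<Delta>" by (simp add: pos_le_divide_eq)
    then have "\<kappa>s * (norm g * \<Delta>)
        \<le> \<kappa>s * max (norm g * min \<Delta> (norm g / max (matnorm Hh) 1)) (tau_m Hh * \<Delta>\<^sup>2)"
      using \<open>0 < \<kappa>s\<close> by simp
    with decrease have "\<kappa>s * (norm g * \<Delta>) \<le> d" by linarith
    moreover have "\<kappa>s * (\<Delta> * C * \<Delta>) \<le> \<kappa>s * (norm g * \<Delta>)"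
      using True assms(1,2) by (intro mult_left_mono mult_right_mono) auto
    ultimately have "\<kappa>s * (\<Delta> * C * \<Delta>) \<le> d" by linarith
    moreover have "\<kappa>ef * \<Delta> ^ 3 \<le> (1 - \<eta>) * (\<kappa>s * (\<Delta> * C * \<Delta>))"
      using assms(5) assms(1) by (simp add: power3_eq_cube mult_right_mono mult_ac)
    ultimately show ?thesis using assms(1,2) \<open>0 < C\<close> by (intro that) auto
  next
    case False
    then have tau: "\<Delta> * C < tau_m Hh"
      using critical unfolding sigma_m_def by linarith
    have "\<kappa>s * (tau_m Hh * \<Delta>\<^sup>2)
        \<le> \<kappa>s * max (norm g * min \<Delta> (norm g / max (matnorm Hh) 1)) (tau_m Hh * \<Delta>\<^sup>2)"
      using \<open>0 < \<kappa>s\<close> by simp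
    with decrease have "\<kappa>s * (tau_m Hh * \<Delta>\<^sup>2) \<le> d" by linarith
    moreover have "\<kappa>s * (\<Delta> * C * \<Delta>\<^sup>2) \<le> \<kappa>s * (tau_m Hh * \<Delta>\<^sup>2)"
      using tau assms(1,2) by (intro mult_left_mono mult_right_mono) auto
    ultimately have "\<kappa>s * (\<Delta> * C * \<Delta>\<^sup>2) \<le> d" by linarith
    moreover have "\<kappa>ef * \<Delta> ^ 3 \<le> (1 - \<eta>) * (\<kappa>s * (\<Delta> * C * \<Delta>\<^sup>2))"
      using assms(6) assms(1) by (simp add: power3_eq_cube power2_eq_square mult_right_mono mult_ac)
    ultimately show ?thesis using assms(1,2) \<open>0 < C\<close> by (intro that) auto
  qed
  show "0 < d" using b by linarith
  have "(1 - \<eta>) * b \<le> (1 - \<eta>) * d" using b(2) \<open>\<eta> < 1\<close> by (intro mult_left_mono) auto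
  with b(3) show "\<kappa>ef * \<Delta> ^ 3 \<le> (1 - \<eta>) * d" by linarith
qed

lemma successful_if_model_critical:
  fixes g :: "real^'p" and Hh :: "real^'p^'p"
  assumes "0 < \<Delta>" "0 < \<kappa>s" "\<eta> < 1" "max (matnorm Hh) 1 \<le> C" "\<mu> \<le> C"
    and "\<kappa>ef * \<Delta> \<le> \<kappa>s * (1 - \<eta>) * C" "\<kappa>ef \<le> \<kappa>s * (1 - \<eta>) * C"
    and critical: "\<Delta> * C < sigma_m g Hh"
    and decrease: "mhat fx g Hh 0 - mhat fx g Hh s
      \<ge> \<kappa>s * max (norm g * min \<Delta> (norm g / max (matnorm Hh) 1)) (tau_m Hh * \<Delta>\<^sup>2)"
    and model_err: "\<bar>fs - mhat fx g Hh s\<bar> \<le> \<kappa>ef * \<Delta> ^ 3"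
  shows "(fx - fs) / (mhat fx g Hh 0 - mhat fx g Hh s) \<ge> \<eta> \<and> sigma_m g Hh \<ge> \<mu> * \<Delta>"
proof
  define d where "d = mhat fx g Hh 0 - mhat fx g Hh s"
  have d: "0 < d" "\<kappa>ef * \<Delta> ^ 3 \<le> (1 - \<eta>) * d"
    using model_decrease_dominates_error[OF assms(1-4,6-8) decrease] unfolding d_def by auto
  have "mhat fx g Hh s = fx - d" unfolding d_def by (simp add: mhat_def)
  with model_err d(2) have "\<eta> * d \<le> fx - fs" by (simp add: algebra_simps abs_le_iff)
  with d(1) show "(fx - fs) / (mhat fx g Hh 0 - mhat fx g Hh s) \<ge> \<eta>"
    unfolding d_def[symmetric] by (simp add: pos_le_divide_eq)
  show "sigma_m g Hh \<ge> \<mu> * \<Delta>"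
    using critical mult_right_mono[OF \<open>\<mu> \<le> C\<close>, of \<Delta>] \<open>0 < \<Delta>\<close>
    unfolding mult.commute[of C \<Delta>] by linarith
qed

lemma inverse_c0_bounds:
  fixes \<mu> \<kappa>H \<kappa>s \<kappa>ef \<eta> \<Delta>max :: real
  assumes "0 < \<mu>" "0 < \<kappa>H" "0 < \<kappa>s" "\<eta> < 1" "0 < \<kappa>ef" "0 < \<Delta>max"
  defines "C \<equiv> inverse (min (1 / \<mu>) (min (1 / \<kappa>H)
      (min (\<kappa>s * (1 - \<eta>) / (\<kappa>ef * \<Delta>max)) (\<kappa>s * (1 - \<eta>) / \<kappa>ef))))"
  shows "0 < C" "\<mu> \<le> C" "\<kappa>H \<le> C" "\<kappa>ef * \<Delta>max \<le> \<kappa>s * (1 - \<eta>) * C"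
    "\<kappa>ef \<le> \<kappa>s * (1 - \<eta>) * C"
proof -
  define c0 where "c0 = min (1 / \<mu>) (min (1 / \<kappa>H)
      (min (\<kappa>s * (1 - \<eta>) / (\<kappa>ef * \<Delta>max)) (\<kappa>s * (1 - \<eta>) / \<kappa>ef)))"
  have C: "C = inverse c0" unfolding C_def c0_def ..
  have c0: "0 < c0" unfolding c0_def using assms(1-6) by simp
  then show "0 < C" unfolding C by simp
  have le_C: "inverse q \<le> C" if "c0 \<le> q" for q
    unfolding C using le_imp_inverse_le[OF that c0] .
  show "\<mu> \<le> C" using le_C[of "1 / \<mu>"] unfolding c0_def by simp
  show "\<kappa>H \<le> C" using le_C[of "1 / \<kappa>H"] unfolding c0_def by simp
  have "0 < \<kappa>s * (1 - \<eta>)" using assms(3,4) by simp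
  then show "\<kappa>ef * \<Delta>max \<le> \<kappa>s * (1 - \<eta>) * C" "\<kappa>ef \<le> \<kappa>s * (1 - \<eta>) * C"
    using le_C[of "\<kappa>s * (1 - \<eta>) / (\<kappa>ef * \<Delta>max)"] le_C[of "\<kappa>s * (1 - \<eta>) / \<kappa>ef"]
    unfolding c0_def by (simp_all add: pos_divide_le_eq mult.commute)
qed

theorem lemma3p11:
  fixes f :: "real^'n \<Rightarrow> real"
    and grad :: "real^'n \<Rightarrow> real^'n"
    and hess :: "real^'n \<Rightarrow> real^'n^'n"
    and x :: "nat \<Rightarrow> real^'n"
    and P :: "nat \<Rightarrow> real^'p^'n"
    and ghat :: "nat \<Rightarrow> real^'p"
    and Hhat :: "nat \<Rightarrow> real^'p^'p"
    and shat :: "nat \<Rightarrow> real^'p"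
    and \<Delta> :: "nat \<Rightarrow> real"
    and lam :: "nat \<Rightarrow> nat \<Rightarrow> real"
    and v :: "nat \<Rightarrow> nat \<Rightarrow> real^'n"
    and r K :: nat
    and \<Delta>max \<gamma>dec \<gamma>inc \<eta> \<mu> \<kappa>ef \<kappa>eg \<kappa>eh \<kappa>H \<kappa>s flow LH M \<alpha> Pmax \<epsilon> :: real
  assumes p_le_n: "CARD('p) \<le> CARD('n)"
    and Delta0: "0 < \<Delta> 0" "\<Delta> 0 \<le> \<Delta>max"
    and gammas: "0 < \<gamma>dec" "\<gamma>dec < 1" "1 < \<gamma>inc"
    and eta: "0 < \<eta>" "\<eta> < 1"
    and mu: "\<mu> > 0"
    and kappas: "\<kappa>ef > 0" "\<kappa>eg > 0" "\<kappa>eh > 0"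
    and alpha: "0 < \<alpha>" "\<alpha> < 1"
    and Pmax: "Pmax > 0"
    (* f: bounded below, C^2 with L_H-Lipschitz Hessian, Hessian bounded along iterates *)
    and f_low: "\<And>y. f y \<ge> flow"
    and f_grad: "\<And>y. (f has_derivative (\<lambda>h. grad y \<bullet> h)) (at y)"
    and f_hess: "\<And>y. (grad has_derivative (\<lambda>h. hess y *v h)) (at y)"
    and hess_cont: "continuous_on UNIV hess"
    and hess_lip: "\<And>y z. matnorm (hess y - hess z) \<le> LH * norm (y - z)"
    and hess_bnd: "\<And>k. matnorm (hess (x k)) \<le> M"
    (* model: symmetric, P_k-fully quadratic, bounded Hessian *)
    and Hhat_sym: "\<And>k. transpose (Hhat k) = Hhat k"
    and Hhat_bnd: "\<And>k. matnorm (Hhat k) \<le> \<kappa>H" and kappaH: "\<kappa>H \<ge> 1"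
    and fq_f: "\<And>k s. norm s \<le> \<Delta> k \<Longrightarrow>
        \<bar>f (x k + P k *v s) - mhat (f (x k)) (ghat k) (Hhat k) s\<bar> \<le> \<kappa>ef * \<Delta> k ^ 3"
    and fq_g: "\<And>k s. norm s \<le> \<Delta> k \<Longrightarrow>
        norm (transpose (P k) *v grad (x k + P k *v s) - (ghat k + Hhat k *v s)) \<le> \<kappa>eg * \<Delta> k ^ 2"
    and fq_h: "\<And>k s. norm s \<le> \<Delta> k \<Longrightarrow>
        matnorm (transpose (P k) ** hess (x k + P k *v s) ** P k - Hhat k) \<le> \<kappa>eh * \<Delta> k"
    (* step: inside trust region, sufficient decrease *)
    and step_tr: "\<And>k. norm (shat k) \<le> \<Delta> k"
    and kappa_s: "\<kappa>s > 0"
    and step_dec: "\<And>k. mhat (f (x k)) (ghat k) (Hhat k) 0 - mhat (f (x k)) (ghat k) (Hhat k) (shat k)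
        \<ge> \<kappa>s * max (norm (ghat k) * min (\<Delta> k) (norm (ghat k) / max (matnorm (Hhat k)) 1))
                      (tau_m (Hhat k) * \<Delta> k ^ 2)"
    (* iteration updates *)
    and update: "\<And>k. (f (x k) - f (x k + P k *v shat k)) /
          (mhat (f (x k)) (ghat k) (Hhat k) 0 - mhat (f (x k)) (ghat k) (Hhat k) (shat k)) \<ge> \<eta>
        \<and> sigma_m (ghat k) (Hhat k) \<ge> \<mu> * \<Delta> k
      \<Longrightarrow> x (Suc k) = x k + P k *v shat k \<and> \<Delta> (Suc k) = min (\<gamma>inc * \<Delta> k) \<Delta>max"
    and update': "\<And>k. \<not> ((f (x k) - f (x k + P k *v shat k)) /
          (mhat (f (x k)) (ghat k) (Hhat k) 0 - mhat (f (x k)) (ghat k) (Hhat k) (shat k)) \<ge> \<eta>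
        \<and> sigma_m (ghat k) (Hhat k) \<ge> \<mu> * \<Delta> k)
      \<Longrightarrow> x (Suc k) = x k \<and> \<Delta> (Suc k) = \<gamma>dec * \<Delta> k"
    (* eigendecomposition of the Hessian at x_k, rank r *)
    and rank_r: "\<And>k. k \<le> K \<Longrightarrow> rank (hess (x k)) = r"
    and eig_decomp: "\<And>k. k \<le> K \<Longrightarrow>
        hess (x k) = (\<Sum>i=1..r. lam k i *\<^sub>R outer (v k i) (v k i))"
    and eig_order: "\<And>k i j. k \<le> K \<Longrightarrow> 1 \<le> i \<Longrightarrow> i \<le> j \<Longrightarrow> j \<le> r \<Longrightarrow> lam k j \<le> lam k i"
    and eig_orth: "\<And>k i j. k \<le> K \<Longrightarrow> i \<in> {1..r} \<Longrightarrow> j \<in> {1..r} \<Longrightarrow>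
        v k i \<bullet> v k j = (if i = j then 1 else 0)"
    (* epsilon, theta, criticality *)
    and eps: "\<epsilon> > 0"
    and theta_pos: "(1 - \<alpha>)^2 - 4 * M * (real r - 1) * \<alpha>^2 / (\<epsilon> * (1 - \<alpha>)^2) > 0"
    and crit_eps: "\<And>k. k \<le> K \<Longrightarrow> crit (grad (x k)) (hess (x k)) \<ge> \<epsilon>"
  shows "\<forall>D. D \<le> (min (1 - \<alpha>) (min ((1 - \<alpha>)^2)
                 ((1 - \<alpha>)^2 - 4 * M * (real r - 1) * \<alpha>^2 / (\<epsilon> * (1 - \<alpha>)^2))))
               / (max (\<kappa>eg * \<Delta>max) \<kappa>eh
                  + inverse (min (1 / \<mu>) (min (1 / \<kappa>H)
                      (min (\<kappa>s * (1 - \<eta>) / (\<kappa>ef * \<Delta>max)) (\<kappa>s * (1 - \<eta>) / \<kappa>ef)))))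
               * \<epsilon> \<longrightarrow>
      card ({k. k \<le> K \<and> well_aligned \<alpha> Pmax (grad (x k)) r (v k) (P k)}
            \<inter> {k. k \<le> K \<and> \<Delta> k < D}
            \<inter> {k. k \<le> K \<and> \<not> ((f (x k) - f (x k + P k *v shat k)) /
                 (mhat (f (x k)) (ghat k) (Hhat k) 0 - mhat (f (x k)) (ghat k) (Hhat k) (shat k)) \<ge> \<eta>
                 \<and> sigma_m (ghat k) (Hhat k) \<ge> \<mu> * \<Delta> k)}) = 0"
proof -
  define c where "c = min (1 - \<alpha>) (min ((1 - \<alpha>)^2)
    ((1 - \<alpha>)^2 - 4 * M * (real r - 1) * \<alpha>^2 / (\<epsilon> * (1 - \<alpha>)^2)))"
  define \<kappa>\<sigma> where "\<kappa>\<sigma> = max (\<kappa>eg * \<Delta>max) \<kappa>eh"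
  define C where "C = inverse (min (1 / \<mu>) (min (1 / \<kappa>H)
    (min (\<kappa>s * (1 - \<eta>) / (\<kappa>ef * \<Delta>max)) (\<kappa>s * (1 - \<eta>) / \<kappa>ef))))"
  have "\<Delta> (Suc k) = min (\<gamma>inc * \<Delta> k) \<Delta>max \<or> \<Delta> (Suc k) = \<gamma>dec * \<Delta> k" for k
    using update[of k] update'[of k] by blast
  then have \<Delta>_bounds: "0 < \<Delta> k \<and> \<Delta> k \<le> \<Delta>max" for k
    using Delta0 gammas by (intro trust_radius_bounds[where \<gamma>dec = \<gamma>dec and \<gamma>inc = \<gamma>inc]) auto
  have "0 < \<kappa>H" "0 < \<Delta>max" using kappaH Delta0 by linarith+
  note C = inverse_c0_bounds[OF mu this(1) kappa_s eta(2) kappas(1) this(2), folded C_def]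
  have "0 < \<kappa>\<sigma> + C" unfolding \<kappa>\<sigma>_def using kappas C \<Delta>_bounds[of 0] by auto
  have successful: "(f (x k) - f (x k + P k *v shat k)) /
      (mhat (f (x k)) (ghat k) (Hhat k) 0 - mhat (f (x k)) (ghat k) (Hhat k) (shat k)) \<ge> \<eta>
    \<and> sigma_m (ghat k) (Hhat k) \<ge> \<mu> * \<Delta> k"
    if k: "k \<le> K" "well_aligned \<alpha> Pmax (grad (x k)) r (v k) (P k)" "\<Delta> k < D"
      and D: "D \<le> c / (\<kappa>\<sigma> + C) * \<epsilon>" for k D
  proof -
    interpret orthonormal_eigendecomposition "hess (x k)" "lam k" "v k" r
      using eig_decomp eig_orth k(1) by unfold_locales auto
    have \<Delta>k: "0 < \<Delta> k" "\<Delta> k \<le> \<Delta>max" using \<Delta>_bounds by auto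
    have "\<Delta> k < c * \<epsilon> / (\<kappa>\<sigma> + C)" using k(3) D by simp
    then have below: "\<Delta> k * (\<kappa>\<sigma> + C) < c * \<epsilon>" using \<open>0 < \<kappa>\<sigma> + C\<close> by (simp add: pos_less_divide_eq)
    have "norm (transpose (P k) *v grad (x k) - ghat k) \<le> \<kappa>eg * (\<Delta> k)\<^sup>2"
      using fq_g[of 0 k] \<Delta>k by simp
    moreover have "matnorm (transpose (P k) ** hess (x k) ** P k - Hhat k) \<le> \<kappa>eh * \<Delta> k"
      using fq_h[of 0 k] \<Delta>k by simp
    ultimately have "c * \<epsilon> - \<kappa>\<sigma> * \<Delta> k \<le> sigma_m (ghat k) (Hhat k)"
      unfolding \<kappa>\<sigma>_def using kappas(2) \<Delta>k
      by (intro model_criticality_ge[OF eig_order[OF k(1)] alpha(2) eps crit_eps[OF k(1)] hess_bnd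
            k(2) Hhat_sym]) (auto simp: c_def)
    with below have "\<Delta> k * C < sigma_m (ghat k) (Hhat k)" by (simp add: algebra_simps)
    moreover have "\<kappa>ef * \<Delta> k \<le> \<kappa>s * (1 - \<eta>) * C"
      using C(4) mult_left_mono[OF \<Delta>k(2) less_imp_le[OF kappas(1)]] by linarith
    moreover have "max (matnorm (Hhat k)) 1 \<le> C" using Hhat_bnd[of k] kappaH C(3) by simp
    ultimately show ?thesis
      using \<Delta>k(1) C(2,5) kappa_s eta(2) step_dec fq_f[OF step_tr]
      by (intro successful_if_model_critical[where \<kappa>ef = \<kappa>ef and C = C]) auto
  qed
  show ?thesis
    unfolding c_def[symmetric] \<kappa>\<sigma>_def[symmetric] C_def[symmetric] card_eq_0_iff
    using successful by blast
qed

end
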